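(* Let $\mathcal{A}$ be a finite-dimensional commutative $\mathbb{K}$-algebra and let $\Lambda:\mathcal{A}\to\mathbb{K}$ be a linear map such that the rank of the bilinear form $(a,b)\mapsto\Lambda(ab)$ on $\mathcal{A}$ is maximal among all linear maps $\mathcal{A}\to\mathbb{K}$. Then $\mathcal{R}(\Lambda)\subseteq\mathrm{Rad}(\mathcal{A})$.
   Context: $\mathbb{K}$ is an algebraically closed field. $\mathcal{R}(\Lambda):=\{a\in\mathcal{A}:\Lambda(ab)=0\ \forall b\in\mathcal{A}\}$. $\mathrm{Rad}(\mathcal{A})$ is the radical of $\mathcal{A}$ (the nilradical, which for a finite-dimensional commutative algebra equals the intersection of its maximal ideals). *)

theory Defs
  imports "HOL-Computational_Algebra.Polynomial" "HOL-Library.Function_Algebras"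
begin

definition comm_K_algebra :: "('k::field \<Rightarrow> 'a::comm_ring_1 \<Rightarrow> 'a) \<Rightarrow> bool" where
  "comm_K_algebra scale \<longleftrightarrow> vector_space scale \<and>
     (\<forall>c a b. scale c (a * b) = scale c a * b)"

definition fin_dim :: "('k::field \<Rightarrow> 'a::ab_group_add \<Rightarrow> 'a) \<Rightarrow> bool" where
  "fin_dim scale \<longleftrightarrow> (\<exists>B. finite B \<and> module.span scale B = UNIV)"

text \<open>Rank of the bilinear form (a,b) \<mapsto> \<Lambda>(ab): dimension of the image of
  the induced map A \<rightarrow> A^*, a \<mapsto> (b \<mapsto> \<Lambda>(ab)), inside the K-space of functions A \<rightarrow> K.\<close>
definition bform_rank :: "('k::field \<Rightarrow> 'a::comm_ring_1 \<Rightarrow> 'a) \<Rightarrow> ('a \<Rightarrow> 'k) \<Rightarrow> nat" where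
  "bform_rank scale \<Lambda> =
     vector_space.dim (\<lambda>(c::'k) (f::'a \<Rightarrow> 'k) x. c * f x) ((\<lambda>a b. \<Lambda> (a * b)) ` UNIV)"

definition RLam :: "('a::comm_ring_1 \<Rightarrow> 'k::field) \<Rightarrow> 'a set" where
  "RLam \<Lambda> = {a. \<forall>b. \<Lambda> (a * b) = 0}"

definition Rad :: "'a::comm_ring_1 set" where
  "Rad = {a. \<exists>n. a ^ n = 0}"

end

theory Submission
  imports Defs
begin

(* Let a be an element of R(Lambda) that is not nilpotent.  Since the algebra A
   is finite-dimensional, the descending chain of principal ideals a^n A stabilises (Fitting),
   and from a^n A = a^(n+1) A one extracts a nonzero idempotent e in the ideal aA.  Because
   a is in R(Lambda), the form of Lambda vanishes on e A.  Choose a functional mu with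
   mu(e) = 1 and put M(x) = Lambda(x) + mu(e x).  Every functional b |-> Lambda(a b) is also
   of the form b |-> M(a' b) (take a' = (1 - e) a), while b |-> M(e b) takes the value 1 at e,
   where all functionals b |-> Lambda(a b) vanish.  Hence the rank of M exceeds that of Lambda,
   contradicting maximality. *)

text \<open>No finite-dimensionality of the ambient space is assumed, which
  matters because the forms live in the infinite-dimensional space of all functions A \<Rightarrow> K.\<close>

lemma (in vector_space) dim_less_if_not_in_span:
  assumes F: "finite F" "T \<subseteq> span F"
    and ST: "S \<subseteq> T" and g: "g \<in> T" "g \<notin> span S"
  shows "dim S < dim T"
proof -
  obtain A where A: "A \<subseteq> S" "independent A" "S \<subseteq> span A" "card A = dim S"
    using basis_exists[of S] by blast
  obtain C where C: "C \<subseteq> T" "independent C" "T \<subseteq> span C" "card C = dim T"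
    using basis_exists[of T] by blast
  have "finite C"
    using independent_span_bound[OF F(1) C(2)] C(1) F(2) by blast
  have "g \<notin> span A"
    using g(2) span_mono[OF A(1)] by blast
  then have indep: "independent (insert g A)" and "g \<notin> A"
    using independent_insertI[OF _ A(2)] span_base by blast+
  have "insert g A \<subseteq> span C"
    using A(1) ST g(1) C(3) by blast
  from independent_span_bound[OF \<open>finite C\<close> indep this]
  have "finite A" and "card (insert g A) \<le> card C" by auto
  with \<open>g \<notin> A\<close> A(4) C(4) show ?thesis by simp
qed

lemma power_absorbs_higher_powers:
  fixes a x :: "'a::comm_ring_1"
  assumes "a ^ n = a ^ Suc n * x"
  shows "a ^ n = a ^ (n + k) * x ^ k"
proof (induction k)
  case 0
  show ?case by simp
next
  case (Suc k)
  have "a ^ (n + Suc k) * x ^ Suc k = a ^ k * x ^ k * (a ^ Suc n * x)"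
    by (simp add: algebra_simps power_add)
  also have "\<dots> = a ^ k * x ^ k * a ^ n"
    by (simp only: assms[symmetric])
  also have "\<dots> = a ^ (n + k) * x ^ k"
    by (simp add: algebra_simps power_add)
  finally show ?case using Suc by simp
qed

lemma vector_space_field_self: "vector_space ((*) :: 'k::field \<Rightarrow> 'k \<Rightarrow> 'k)"
  by unfold_locales (simp_all add: algebra_simps)

global_interpretation fun_space: vector_space "\<lambda>(c::'k::field) (f::'a \<Rightarrow> 'k) x. c * f x"
  by unfold_locales (simp_all add: fun_eq_iff algebra_simps)

definition form_map :: "('a::times \<Rightarrow> 'k) \<Rightarrow> 'a \<Rightarrow> 'a \<Rightarrow> 'k" where
  "form_map M a = (\<lambda>b. M (a * b))"

lemma bform_rank_form_map: "bform_rank scale M = fun_space.dim (range (form_map M))"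
  unfolding bform_rank_def form_map_def ..

locale fin_dim_comm_algebra = vector_space scale
  for scale :: "'k::field \<Rightarrow> 'a::comm_ring_1 \<Rightarrow> 'a" +
  assumes scale_mult_left: "scale c (a * b) = scale c a * b"
    and finitely_spanned: "fin_dim scale"

lemma fin_dim_comm_algebraI:
  assumes "comm_K_algebra scale" and "fin_dim scale"
  shows "fin_dim_comm_algebra scale"
  using assms unfolding comm_K_algebra_def fin_dim_comm_algebra_def fin_dim_comm_algebra_axioms_def
  by blast

context fin_dim_comm_algebra
begin

lemma scale_mult_right: "scale c (a * b) = a * scale c b"
  using scale_mult_left[of c b a] by (simp add: mult.commute)

lemma subspace_principal_ideal: "subspace (range (\<lambda>x. y * x))"
  unfolding subspace_def
proof (intro conjI ballI allI)
  show "0 \<in> range (\<lambda>x. y * x)"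
    by (rule range_eqI[of _ _ 0]) simp
next
  fix u v assume "u \<in> range (\<lambda>x. y * x)" "v \<in> range (\<lambda>x. y * x)"
  then obtain u' v' where "u = y * u'" "v = y * v'" by blast
  then show "u + v \<in> range (\<lambda>x. y * x)"
    by (intro range_eqI[of _ _ "u' + v'"]) (simp add: distrib_left)
next
  fix c u assume "u \<in> range (\<lambda>x. y * x)"
  then obtain u' where "u = y * u'" by blast
  then show "scale c u \<in> range (\<lambda>x. y * x)"
    by (intro range_eqI[of _ _ "scale c u'"]) (simp add: scale_mult_right)
qed

lemma decreasing_subspaces_stabilize:
  assumes sub: "\<And>n. subspace (R n)" and dec: "\<And>n. R (Suc n) \<subseteq> R n"
  shows "\<exists>n. R (Suc n) = R n"
proof (rule ccontr)
  assume "\<nexists>n. R (Suc n) = R n"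
  obtain B where B: "finite B" "span B = UNIV"
    using finitely_spanned unfolding fin_dim_def by blast
  have drop: "dim (R (Suc n)) < dim (R n)" for n
  proof -
    obtain g where "g \<in> R n" "g \<notin> R (Suc n)"
      using dec[of n] \<open>\<nexists>n. R (Suc n) = R n\<close> by blast
    moreover have "span (R (Suc n)) = R (Suc n)"
      using span_eq_iff[of "R (Suc n)"] sub by blast
    ultimately have "g \<notin> span (R (Suc n))"
      by metis
    then show ?thesis
      using dim_less_if_not_in_span[OF B(1) _ dec \<open>g \<in> R n\<close>] B(2) by blast
  qed
  have "dim (R n) + n \<le> dim (R 0)" for n
  proof (induction n)
    case 0
    show ?case by simp
  next
    case (Suc n)
    then show ?case using drop[of n] by simp
  qed
  from this[of "Suc (dim (R 0))"] show False by simp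
qed

lemma power_multiple_of_next_power:
  fixes a :: 'a
  shows "\<exists>n x. a ^ n = a ^ Suc n * x"
proof -
  define R where "R n = range (\<lambda>x. a ^ n * x)" for n
  have "R (Suc n) \<subseteq> R n" for n
  proof
    fix y assume "y \<in> R (Suc n)"
    then obtain x where "y = a ^ Suc n * x"
      unfolding R_def by blast
    then have "y = a ^ n * (a * x)"
      by (simp add: mult_ac)
    then show "y \<in> R n"
      unfolding R_def by blast
  qed
  then obtain n where "R (Suc n) = R n"
    using decreasing_subspaces_stabilize[of R] subspace_principal_ideal unfolding R_def by blast
  moreover have "a ^ n \<in> R n"
    unfolding R_def by (rule range_eqI[of _ _ 1]) simp
  ultimately show ?thesis
    unfolding R_def by blast
qed

lemma idempotent_in_principal_ideal:
  fixes a :: 'a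
  assumes "\<forall>n. a ^ n \<noteq> 0"
  shows "\<exists>u. (a * u) * (a * u) = a * u \<and> a * u \<noteq> 0"
proof -
  obtain n x where nx: "a ^ n = a ^ Suc n * x"
    using power_multiple_of_next_power by blast
  have absorb: "a ^ n = a ^ (2 * n + 1) * x ^ Suc n"
    using power_absorbs_higher_powers[OF nx, of "Suc n"] by (simp add: mult_2)
  define u where "u = a ^ n * x ^ Suc n"
  have "(a * u) * (a * u) = a * (a ^ (2 * n + 1) * x ^ Suc n) * x ^ Suc n"
    unfolding u_def by (simp add: algebra_simps power_add mult_2_right)
  also have "\<dots> = a * u"
    unfolding u_def absorb[symmetric] by (simp add: mult.assoc)
  finally have idem: "(a * u) * (a * u) = a * u" .
  have "a ^ n * (a * u) = a ^ (2 * n + 1) * x ^ Suc n"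
    unfolding u_def by (simp add: algebra_simps power_add mult_2_right)
  also have "\<dots> = a ^ n"
    by (rule absorb[symmetric])
  finally have "a * u \<noteq> 0"
    using assms by auto
  with idem show ?thesis by blast
qed

lemma linear_form_map:
  assumes M: "Vector_Spaces.linear scale (*) M"
  shows "Vector_Spaces.linear scale (\<lambda>c f x. c * f x) (form_map M)"
  unfolding Vector_Spaces.linear_iff
proof (intro conjI allI)
  have add: "M (x + y) = M x + M y" and hom: "M (scale c x) = c * M x" for x y c
    using M unfolding Vector_Spaces.linear_iff by auto
  show "vector_space scale" by unfold_locales
  show "vector_space (\<lambda>(c::'k) (f::'a \<Rightarrow> 'k) x. c * f x)" by unfold_locales
  show "form_map M (x + y) = form_map M x + form_map M y" for x y
    unfolding form_map_def by (simp add: fun_eq_iff distrib_right add)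
  show "form_map M (scale c x) = (\<lambda>b. c * form_map M x b)" for c x
    unfolding form_map_def by (simp add: scale_mult_left[symmetric] hom)
qed

lemma form_map_range_finitely_spanned:
  assumes "Vector_Spaces.linear scale (*) M"
  obtains F where "finite F" "range (form_map M) \<subseteq> fun_space.span F"
proof -
  obtain B where B: "finite B" "span B = UNIV"
    using finitely_spanned unfolding fin_dim_def by blast
  interpret form: Vector_Spaces.linear scale "\<lambda>c f x. c * f x" "form_map M"
    using linear_form_map[OF assms] unfolding Vector_Spaces.linear_def .
  have "range (form_map M) = fun_space.span (form_map M ` B)"
    by (metis B(2) form.span_image)
  with B(1) show thesis
    using that[of "form_map M ` B"] by blast
qed

lemma functional_one_at:
  assumes "e \<noteq> 0"
  obtains \<mu> where "Vector_Spaces.linear scale (*) \<mu>" "\<mu> e = 1"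
proof -
  interpret pair: vector_space_pair scale "(*) :: 'k \<Rightarrow> 'k \<Rightarrow> 'k"
    by (simp add: vector_space_pair_def vector_space_axioms vector_space_field_self)
  obtain B where B: "{e} \<subseteq> B" "independent B"
    using maximal_independent_subset_extend[of "{e}" UNIV] assms by auto
  obtain \<mu> where \<mu>: "Vector_Spaces.linear scale (*) \<mu>"
      "\<forall>x\<in>B. \<mu> x = (if x = e then 1 else 0)"
    using pair.linear_independent_extend[OF B(2), of "\<lambda>x. if x = e then 1 else 0"] by blast
  have "\<mu> e = 1"
    using \<mu>(2) B(1) by simp
  with \<mu>(1) show thesis
    by (rule that)
qed

lemma linear_perturbation:
  assumes \<Lambda>: "Vector_Spaces.linear scale (*) \<Lambda>" and \<mu>: "Vector_Spaces.linear scale (*) \<mu>"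
  shows "Vector_Spaces.linear scale (*) (\<lambda>x. \<Lambda> x + \<mu> (e * x))"
proof -
  have "\<Lambda> (x + y) = \<Lambda> x + \<Lambda> y" "\<Lambda> (scale c x) = c * \<Lambda> x"
    and "\<mu> (x + y) = \<mu> x + \<mu> y" "\<mu> (scale c x) = c * \<mu> x" for x y c
    using \<Lambda> \<mu> unfolding Vector_Spaces.linear_iff by auto
  then show ?thesis
    unfolding Vector_Spaces.linear_iff
    by (simp add: vector_space_axioms vector_space_field_self distrib_left scale_mult_right[symmetric])
qed

text \<open>Every functional b \<mapsto> \<Lambda>(ab) is also a
  functional of M, namely for (1 - e)a, and the functional b \<mapsto> M(eb) is new, because it
  takes the value 1 at e, where all functionals of \<Lambda> vanish.\<close>

lemma form_rank_increases:
  assumes \<Lambda>: "Vector_Spaces.linear scale (*) \<Lambda>"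
    and idem: "e * e = e" and "e \<noteq> 0" and vanish: "\<And>x. \<Lambda> (e * x) = 0"
  obtains M where "Vector_Spaces.linear scale (*) M" "bform_rank scale \<Lambda> < bform_rank scale M"
proof -
  obtain \<mu> where \<mu>: "Vector_Spaces.linear scale (*) \<mu>" "\<mu> e = 1"
    using functional_one_at \<open>e \<noteq> 0\<close> by blast
  define M where "M x = \<Lambda> x + \<mu> (e * x)" for x
  have M: "Vector_Spaces.linear scale (*) M"
    unfolding M_def[abs_def] using linear_perturbation[OF \<Lambda> \<mu>(1)] .
  interpret \<Lambda>: Vector_Spaces.linear scale "(*)" \<Lambda>
    using \<Lambda> unfolding Vector_Spaces.linear_def .
  interpret \<mu>: Vector_Spaces.linear scale "(*)" \<mu>
    using \<mu>(1) unfolding Vector_Spaces.linear_def .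
  have "form_map \<Lambda> a = form_map M ((1 - e) * a)" for a
  proof -
    have "e * ((1 - e) * a * b) = 0" for b
      using idem by (simp add: algebra_simps)
    moreover have "\<Lambda> ((1 - e) * a * b) = \<Lambda> (a * b)" for b
    proof -
      have "(1 - e) * a * b = a * b - e * (a * b)"
        by (simp add: algebra_simps)
      then show ?thesis
        using vanish[of "a * b"] by (simp add: \<Lambda>.diff)
    qed
    ultimately show ?thesis
      unfolding form_map_def M_def using \<mu>.zero by (simp add: mult.assoc)
  qed
  then have sub: "range (form_map \<Lambda>) \<subseteq> range (form_map M)"
    by blast
  have "fun_space.span (range (form_map \<Lambda>)) \<subseteq> {h. h e = 0}"
    by (rule fun_space.span_minimal)
      (auto simp: fun_space.subspace_def form_map_def vanish mult.commute[of _ e])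
  moreover have "form_map M e e = 1"
    unfolding form_map_def M_def using idem vanish[of 1] \<mu>(2) by simp
  ultimately have new: "form_map M e \<notin> fun_space.span (range (form_map \<Lambda>))"
    by auto
  obtain F where "finite F" "range (form_map M) \<subseteq> fun_space.span F"
    using form_map_range_finitely_spanned[OF M] by blast
  from fun_space.dim_less_if_not_in_span[OF this sub _ new]
  have "bform_rank scale \<Lambda> < bform_rank scale M"
    unfolding bform_rank_form_map by blast
  with M show thesis
    by (rule that)
qed

end

text \<open>The theorem.\<close>

theorem theorem3p5:
  fixes scale :: "'k::alg_closed_field \<Rightarrow> 'a::comm_ring_1 \<Rightarrow> 'a"
    and \<Lambda> :: "'a \<Rightarrow> 'k"
  assumes "comm_K_algebra scale"
    and "fin_dim scale"
    and "Vector_Spaces.linear scale (*) \<Lambda>"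
    and "\<forall>M. Vector_Spaces.linear scale (*) M \<longrightarrow> bform_rank scale M \<le> bform_rank scale \<Lambda>"
  shows "RLam \<Lambda> \<subseteq> Rad"
proof
  fix a assume a: "a \<in> RLam \<Lambda>"
  show "a \<in> Rad"
  proof (rule ccontr)
    assume "a \<notin> Rad"
    interpret fin_dim_comm_algebra scale
      using fin_dim_comm_algebraI[OF assms(1,2)] .
    obtain u where e: "(a * u) * (a * u) = a * u" "a * u \<noteq> 0"
      using idempotent_in_principal_ideal[of a] \<open>a \<notin> Rad\<close> unfolding Rad_def by blast
    have "\<Lambda> (a * u * x) = 0" for x
      using a unfolding RLam_def by (simp add: mult.assoc)
    then obtain M where "Vector_Spaces.linear scale (*) M" "bform_rank scale \<Lambda> < bform_rank scale M"
      using form_rank_increases[OF assms(3) e] by blast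
    with assms(4) show False
      by (meson leD)
  qed
qed

end
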